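(* Let $\Gamma$ be a group acting quasi-transitively on a tree $T$ with infinitely many ends, such that the action stabilizes an end of $T$. Then the action of $\Gamma$ on $T$ is not free.
   Context: An action on $T$ is quasi-transitive if $V(T)$ has finitely many orbits. Ends of $T$ are equivalence classes of rays (infinite one-way paths), two rays being equivalent if there are infinitely many disjoint paths between them; $\Gamma$ stabilizes an end if every element maps rays of that end to rays of that end. The action is free if the only element of $\Gamma$ fixing some vertex of $T$ is the identity. *)

theory Defs
  imports "HOL-Algebra.Group_Action"
begin

definition is_walk :: "('v \<times> 'v) set \<Rightarrow> 'v list \<Rightarrow> bool" where
  "is_walk E p \<longleftrightarrow> p \<noteq> [] \<and> (\<forall>i. Suc i < length p \<longrightarrow> (p ! i, p ! Suc i) \<in> E)"

definition is_path :: "('v \<times> 'v) set \<Rightarrow> 'v list \<Rightarrow> bool" where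
  "is_path E p \<longleftrightarrow> is_walk E p \<and> distinct p"

definition is_cycle :: "('v \<times> 'v) set \<Rightarrow> 'v list \<Rightarrow> bool" where
  "is_cycle E c \<longleftrightarrow> length c \<ge> 3 \<and> is_path E c \<and> (last c, hd c) \<in> E"

definition is_tree :: "'v set \<Rightarrow> ('v \<times> 'v) set \<Rightarrow> bool" where
  "is_tree V E \<longleftrightarrow>
     V \<noteq> {} \<and>
     E \<subseteq> V \<times> V \<and> sym E \<and> irrefl E \<and>
     (\<forall>x\<in>V. \<forall>y\<in>V. \<exists>p. is_path E p \<and> hd p = x \<and> last p = y) \<and>
     (\<nexists>c. is_cycle E c)"

definition is_ray :: "('v \<times> 'v) set \<Rightarrow> (nat \<Rightarrow> 'v) \<Rightarrow> bool" where
  "is_ray E r \<longleftrightarrow> inj r \<and> (\<forall>i. (r i, r (Suc i)) \<in> E)"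

definition ray_equiv :: "('v \<times> 'v) set \<Rightarrow> (nat \<Rightarrow> 'v) \<Rightarrow> (nat \<Rightarrow> 'v) \<Rightarrow> bool" where
  "ray_equiv E r s \<longleftrightarrow>
     (\<exists>P. infinite P \<and>
          (\<forall>p\<in>P. is_path E p \<and> hd p \<in> range r \<and> last p \<in> range s) \<and>
          (\<forall>p\<in>P. \<forall>q\<in>P. p \<noteq> q \<longrightarrow> set p \<inter> set q = {}))"

definition end_of :: "('v \<times> 'v) set \<Rightarrow> (nat \<Rightarrow> 'v) \<Rightarrow> (nat \<Rightarrow> 'v) set" where
  "end_of E r = {s. is_ray E s \<and> ray_equiv E r s}"

definition ends :: "('v \<times> 'v) set \<Rightarrow> (nat \<Rightarrow> 'v) set set" where
  "ends E = {end_of E r | r. is_ray E r}"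

definition tree_action :: "('g, 'b) monoid_scheme \<Rightarrow> 'v set \<Rightarrow> ('v \<times> 'v) set \<Rightarrow> ('g \<Rightarrow> 'v \<Rightarrow> 'v) \<Rightarrow> bool" where
  "tree_action G V E \<phi> \<longleftrightarrow> is_tree V E \<and> group_action G V \<phi> \<and>
     (\<forall>g\<in>carrier G. \<forall>x\<in>V. \<forall>y\<in>V. (x, y) \<in> E \<longleftrightarrow> (\<phi> g x, \<phi> g y) \<in> E)"

definition quasi_transitive :: "('g, 'b) monoid_scheme \<Rightarrow> 'v set \<Rightarrow> ('g \<Rightarrow> 'v \<Rightarrow> 'v) \<Rightarrow> bool" where
  "quasi_transitive G V \<phi> \<longleftrightarrow> finite (orbits G V \<phi>)"

definition stabilizes_an_end :: "('g, 'b) monoid_scheme \<Rightarrow> ('v \<times> 'v) set \<Rightarrow> ('g \<Rightarrow> 'v \<Rightarrow> 'v) \<Rightarrow> bool" where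
  "stabilizes_an_end G E \<phi> \<longleftrightarrow>
     (\<exists>\<omega>\<in>ends E. \<forall>g\<in>carrier G. \<forall>r\<in>\<omega>. (\<phi> g \<circ> r) \<in> \<omega>)"

definition free_action :: "('g, 'b) monoid_scheme \<Rightarrow> 'v set \<Rightarrow> ('g \<Rightarrow> 'v \<Rightarrow> 'v) \<Rightarrow> bool" where
  "free_action G V \<phi> \<longleftrightarrow> (\<forall>g\<in>carrier G. \<forall>v\<in>V. \<phi> g v = v \<longrightarrow> g = \<one>\<^bsub>G\<^esub>)"

end

(*
  Let r0 be a ray in the end fixed by the action. Every vertex v starts a unique ray that
  eventually runs along r0; its second vertex is the parent of v. As the group fixes the end
  and acts by tree automorphisms, the parent map commutes with the action. If the action were
  free, two distinct vertices x, y with the same ancestor m at the same depth n could not lie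
  in one orbit: y = g x would give g m = m. So each such generation of m has at most as many
  vertices as there are orbits. On the other hand, every ray outside the end of r0 eventually
  descends, away from that end, and rays of distinct ends share only finitely many vertices;
  hence infinitely many ends produce arbitrarily large generations.
*)

theory Submission
  imports Defs
begin

section \<open>Walks, paths and cycles\<close>

lemma is_walk_singleton [simp]: "is_walk E [x]"
  by (simp add: is_walk_def)

lemma is_walk_Cons_Cons: "is_walk E (x # y # xs) \<longleftrightarrow> (x, y) \<in> E \<and> is_walk E (y # xs)"
  unfolding is_walk_def by (auto simp: nth_Cons less_Suc_eq_0_disj)

lemma is_walk_Cons_iff: "is_walk E (x # xs) \<longleftrightarrow> xs = [] \<or> (x, hd xs) \<in> E \<and> is_walk E xs"
  by (cases xs) (simp_all add: is_walk_Cons_Cons)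

lemma is_walk_append:
  assumes "xs \<noteq> []" "ys \<noteq> []"
  shows "is_walk E (xs @ ys) \<longleftrightarrow> is_walk E xs \<and> is_walk E ys \<and> (last xs, hd ys) \<in> E"
  using assms by (induction xs rule: induct_list012) (auto simp: is_walk_Cons_iff)

lemma is_walk_rev: "sym E \<Longrightarrow> is_walk E xs \<Longrightarrow> is_walk E (rev xs)"
proof (induction xs)
  case (Cons x xs)
  then show ?case
    by (cases "xs = []") (auto simp: is_walk_Cons_iff is_walk_append last_rev dest: symD)
qed (simp add: is_walk_def)

lemma is_path_appendD: "is_path E (xs @ ys) \<Longrightarrow> xs \<noteq> [] \<Longrightarrow> is_path E xs"
  by (cases "ys = []") (auto simp: is_path_def is_walk_append)

lemma not_is_path_Nil [simp]: "\<not> is_path E []"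
  by (simp add: is_path_def is_walk_def)

lemma cycle_of_meeting_paths:
  assumes "sym E" "is_path E (x # us @ [v])" "is_path E (x # ys @ [v])"
    and "set us \<inter> set ys = {}" "us \<noteq> [] \<or> ys \<noteq> []"
  shows "is_cycle E (x # us @ v # rev ys)"
proof -
  have "is_walk E (rev (x # ys @ [v]))"
    by (rule is_walk_rev[OF assms(1)]) (use assms(3) in \<open>simp add: is_path_def\<close>)
  then have rev_walk: "is_walk E (v # rev ys)"
    using is_walk_append[of "v # rev ys" "[x]" E] by simp
  have "(last (x # us), v) \<in> E"
    using assms(2) is_walk_append[of "x # us" "[v]" E] by (simp add: is_path_def)
  then have "is_walk E ((x # us) @ (v # rev ys))"
    using assms(2) rev_walk is_walk_append[of "x # us" "[v]" E] is_walk_append[of "x # us" "v # rev ys" E]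
    by (simp add: is_path_def)
  moreover have "(x, hd (ys @ [v])) \<in> E"
    using assms(3) by (simp add: is_path_def is_walk_Cons_iff)
  then have "(last (v # rev ys), x) \<in> E"
    using assms(1) by (cases ys) (auto simp: last_rev dest: symD)
  moreover have "distinct (x # us @ v # rev ys)"
    using assms(2-4) by (auto simp: is_path_def)
  moreover have "3 \<le> length (x # us @ v # rev ys)"
    using assms(5) by (auto simp: Suc_le_eq)
  ultimately show ?thesis
    by (simp add: is_cycle_def is_path_def)
qed

locale acyclic_graph =
  fixes E :: "('v \<times> 'v) set"
  assumes sym_edges: "sym E" and irrefl_edges: "irrefl E" and no_cycle: "\<nexists>c. is_cycle E c"
begin

lemma diverging_paths_distinct_last:
  assumes P: "is_path E (x # P)" and Q: "is_path E (x # Q)"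
    and "P \<noteq> []" "Q \<noteq> []" "hd P \<noteq> hd Q"
  shows "last P \<noteq> last Q"
proof
  assume "last P = last Q"
  then have "\<exists>v\<in>set P. v \<in> set Q"
    using last_in_set[OF \<open>P \<noteq> []\<close>] last_in_set[OF \<open>Q \<noteq> []\<close>] by auto
  from split_list_first_prop[OF this] obtain us v ws
    where us: "P = us @ v # ws" "v \<in> set Q" "\<forall>u\<in>set us. u \<notin> set Q"
    by blast
  obtain ys zs where ys: "Q = ys @ v # zs"
    using split_list[OF us(2)] by blast
  have "is_path E (x # us @ [v])"
    using P us(1) is_path_appendD[of E "x # us @ [v]" ws] by simp
  moreover have "is_path E (x # ys @ [v])"
    using Q ys is_path_appendD[of E "x # ys @ [v]" zs] by simp
  moreover have "set us \<inter> set ys = {}"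
    using us(3) ys by auto
  moreover have "us \<noteq> [] \<or> ys \<noteq> []"
    using \<open>hd P \<noteq> hd Q\<close> us(1) ys by auto
  ultimately have "is_cycle E (x # us @ v # rev ys)"
    by (rule cycle_of_meeting_paths[OF sym_edges])
  then show False
    using no_cycle by blast
qed

lemma unique_path:
  assumes "is_path E P" "is_path E Q" "hd P = hd Q" "last P = last Q"
  shows "P = Q"
  using assms
proof (induction P arbitrary: Q)
  case Nil
  then show ?case by simp
next
  case (Cons x P')
  obtain Q' where Q: "Q = x # Q'"
    using Cons.prems(2,3) by (cases Q) auto
  have P': "is_path E P'" "x \<notin> set P'" if "P' \<noteq> []"
    using Cons.prems(1) that by (auto simp: is_path_def is_walk_Cons_iff)
  have Q': "is_path E Q'" "x \<notin> set Q'" if "Q' \<noteq> []"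
    using Cons.prems(2) that Q by (auto simp: is_path_def is_walk_Cons_iff)
  consider "P' = []" "Q' = []" | "P' = []" "Q' \<noteq> []" | "P' \<noteq> []" "Q' = []"
    | "P' \<noteq> []" "Q' \<noteq> []"
    by blast
  then show ?case
  proof cases
    case 1
    then show ?thesis using Q by simp
  next
    case 2
    then have "last Q' = x" using Cons.prems(4) Q by simp
    then show ?thesis using Q'(2)[OF 2(2)] last_in_set[OF 2(2)] by simp
  next
    case 3
    then have "last P' = x" using Cons.prems(4) Q by simp
    then show ?thesis using P'(2)[OF 3(1)] last_in_set[OF 3(1)] by simp
  next
    case 4
    have "last P' = last Q'"
      using Cons.prems(4) Q 4 by simp
    then have "hd P' = hd Q'"
      using diverging_paths_distinct_last[of x P' Q'] Cons.prems(1,2) Q 4 by blast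
    then show ?thesis
      using Cons.IH[of Q'] Cons.prems(4) P' Q' Q 4 by simp
  qed
qed

end

section \<open>Rays, tails and ends\<close>

definition tail_equiv :: "(nat \<Rightarrow> 'a) \<Rightarrow> (nat \<Rightarrow> 'a) \<Rightarrow> bool" where
  "tail_equiv s t \<longleftrightarrow> (\<exists>a b. \<forall>i. s (a + i) = t (b + i))"

lemma tail_equiv_refl: "tail_equiv s s"
  unfolding tail_equiv_def by blast

lemma tail_equiv_sym: "tail_equiv s t \<Longrightarrow> tail_equiv t s"
  unfolding tail_equiv_def by metis

lemma tail_equiv_trans:
  assumes "tail_equiv s t" "tail_equiv t u"
  shows "tail_equiv s u"
proof -
  obtain a b where ab: "\<And>i. s (a + i) = t (b + i)"
    using assms(1) unfolding tail_equiv_def by blast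
  obtain c d where cd: "\<And>i. t (c + i) = u (d + i)"
    using assms(2) unfolding tail_equiv_def by blast
  have "s ((a + c) + i) = u ((d + b) + i)" for i
    using ab[of "c + i"] cd[of "b + i"] by (simp add: ac_simps)
  then show ?thesis
    unfolding tail_equiv_def by blast
qed

lemma tail_equiv_shift: "tail_equiv (\<lambda>i. s (k + i)) s"
  unfolding tail_equiv_def by (metis add_0)

lemma tail_equiv_case_nat: "tail_equiv (case_nat x s) s"
  unfolding tail_equiv_def by (metis add_0 plus_1_eq_Suc old.nat.simps(5))

lemma tail_equiv_comp: "tail_equiv s t \<Longrightarrow> tail_equiv (f \<circ> s) (f \<circ> t)"
  unfolding tail_equiv_def by (metis comp_apply)

lemma finite_coincidences:
  fixes r s :: "nat \<Rightarrow> 'a"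
  assumes "inj r" "finite (range r \<inter> range s)"
  shows "finite {j. r (a + j) = s (b + j)}"
proof -
  let ?J = "{j. r (a + j) = s (b + j)}"
  have "inj (\<lambda>j. r (a + j))"
  proof (rule injI)
    fix j j' assume "r (a + j) = r (a + j')"
    then have "a + j = a + j'"
      by (rule injD[OF assms(1)])
    then show "j = j'"
      by simp
  qed
  then have "inj_on (\<lambda>j. r (a + j)) ?J"
    using inj_on_subset by blast
  moreover have "(\<lambda>j. r (a + j)) ` ?J \<subseteq> range r \<inter> range s"
    by (auto intro: range_eqI[OF sym])
  ultimately show ?thesis
    using assms(2) by (metis finite_subset finite_imageD)
qed

lemma is_ray_shift: "is_ray E s \<Longrightarrow> is_ray E (\<lambda>i. s (k + i))"
  unfolding is_ray_def inj_def by (metis add_Suc_right add_left_cancel)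

lemma is_ray_case_nat:
  assumes "is_ray E s" "(x, s 0) \<in> E" "x \<notin> range s"
  shows "is_ray E (case_nat x s)"
  using assms unfolding is_ray_def inj_def by (auto split: nat.splits)

lemma ray_segment_is_path:
  assumes "is_ray E s" "m < n"
  shows "is_path E (map s [m..<n])"
  using assms unfolding is_ray_def is_path_def is_walk_def
  by (auto simp: distinct_map inj_on_def inj_def)

lemma ray_from_walk:
  assumes "is_walk E W" "is_ray E r" "last W \<in> range r"
  shows "\<exists>s. is_ray E s \<and> s 0 = hd W \<and> tail_equiv s r"
  using assms(1,3)
proof (induction W)
  case Nil
  then show ?case by (simp add: is_walk_def)
next
  case (Cons x W)
  show ?case
  proof (cases "W = []")
    case True
    then obtain c where "x = r c" using Cons.prems(2) by auto
    then show ?thesis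
      using is_ray_shift[OF assms(2), of c] tail_equiv_shift[of r c] by auto
  next
    case False
    then have edge: "(x, hd W) \<in> E" and "is_walk E W"
      using Cons.prems(1) by (auto simp: is_walk_Cons_iff)
    then obtain s where s: "is_ray E s" "s 0 = hd W" "tail_equiv s r"
      using Cons.IH Cons.prems(2) False by auto
    show ?thesis
    proof (cases "x \<in> range s")
      case True
      then obtain j where "x = s j" by auto
      then show ?thesis
        using is_ray_shift[OF s(1), of j] tail_equiv_trans[OF tail_equiv_shift s(3)] by auto
    next
      case False
      then show ?thesis
        using is_ray_case_nat[OF s(1)] edge s tail_equiv_trans[OF tail_equiv_case_nat s(3)]
        by (intro exI[of _ "case_nat x s"]) simp
    qed
  qed
qed

lemma finite_disjoint_lists_hitting:
  assumes "\<forall>X\<in>P. \<forall>Y\<in>P. X \<noteq> Y \<longrightarrow> set X \<inter> set Y = {}"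
    and "\<forall>X\<in>P. f X \<in> set X" "finite S"
  shows "finite {X\<in>P. f X \<in> S}"
proof -
  have "inj_on f {X\<in>P. f X \<in> S}"
  proof (rule inj_onI)
    fix X Y assume "X \<in> {X\<in>P. f X \<in> S}" "Y \<in> {X\<in>P. f X \<in> S}" "f X = f Y"
    then show "X = Y"
      using assms(1,2) by (metis (no_types, lifting) IntI empty_iff mem_Collect_eq)
  qed
  moreover have "f ` {X\<in>P. f X \<in> S} \<subseteq> S"
    by blast
  ultimately show ?thesis
    using assms(3) finite_imageD finite_subset by blast
qed

lemma ray_equiv_refl:
  assumes "is_ray E r"
  shows "ray_equiv E r r"
proof -
  have "inj (\<lambda>i. [r i])"
    using assms by (simp add: is_ray_def inj_def)
  then have "infinite (range (\<lambda>i. [r i]))"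
    using finite_imageD by blast
  then show ?thesis
    unfolding ray_equiv_def by (intro exI[of _ "range (\<lambda>i. [r i])"]) (auto simp: is_path_def)
qed

lemma ray_equiv_tail_equiv:
  assumes "tail_equiv r r'" "ray_equiv E r s"
  shows "ray_equiv E r' s"
proof -
  obtain a b where ab: "\<And>i. r (a + i) = r' (b + i)"
    using assms(1) unfolding tail_equiv_def by blast
  obtain P where P: "infinite P" "\<forall>X\<in>P. is_path E X \<and> hd X \<in> range r \<and> last X \<in> range s"
    and disj: "\<forall>X\<in>P. \<forall>Y\<in>P. X \<noteq> Y \<longrightarrow> set X \<inter> set Y = {}"
    using assms(2) unfolding ray_equiv_def by blast
  have "hd X \<in> range r' \<or> hd X \<in> r ` {..<a}" if X: "X \<in> P" for X
  proof -
    obtain k where k: "hd X = r k"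
      using P(2) X by blast
    show ?thesis
    proof (cases "k < a")
      case False
      then show ?thesis using ab[of "k - a"] k by simp
    qed (use k in simp)
  qed
  then have "P \<subseteq> {X\<in>P. hd X \<in> range r'} \<union> {X\<in>P. hd X \<in> r ` {..<a}}"
    by blast
  moreover have "finite {X\<in>P. hd X \<in> r ` {..<a}}"
  proof (rule finite_disjoint_lists_hitting[OF disj])
    show "\<forall>X\<in>P. hd X \<in> set X"
      using P(2) by (metis hd_in_set not_is_path_Nil)
  qed simp
  ultimately have "infinite {X\<in>P. hd X \<in> range r'}"
    using P(1) by (meson finite_UnI finite_subset)
  then show ?thesis
    unfolding ray_equiv_def using P(2) disj by (intro exI[of _ "{X\<in>P. hd X \<in> range r'}"]) simp
qed

lemma end_of_tail_equiv:
  assumes "tail_equiv r r'"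
  shows "end_of E r = end_of E r'"
  unfolding end_of_def
  using ray_equiv_tail_equiv[OF assms] ray_equiv_tail_equiv[OF tail_equiv_sym[OF assms]] by blast

context acyclic_graph
begin

lemma ray_segments_eq:
  assumes "is_ray E r" "is_ray E s" "r i = s j" "r i' = s j'" "i \<le> i'" "j \<le> j'" "k \<le> i' - i"
  shows "r (i + k) = s (j + k)"
proof -
  have eq: "map r [i..<Suc i'] = map s [j..<Suc j']"
  proof (rule unique_path)
    show "is_path E (map r [i..<Suc i'])" "is_path E (map s [j..<Suc j'])"
      using assms(1,2,5,6) by (simp_all add: ray_segment_is_path del: upt_Suc)
    show "hd (map r [i..<Suc i']) = hd (map s [j..<Suc j'])"
      using assms(3,5,6) by (simp add: hd_map hd_upt del: upt_Suc)
    show "last (map r [i..<Suc i']) = last (map s [j..<Suc j'])"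
      using assms(4,5,6) by (simp add: last_map last_upt del: upt_Suc)
  qed
  then have "Suc i' - i = Suc j' - j"
    by (metis length_map length_upt)
  then show ?thesis
    using arg_cong[OF eq, of "\<lambda>xs. xs ! k"] assms(5-7) by (simp del: upt_Suc)
qed

lemma ray_unique:
  assumes "is_ray E s" "is_ray E t" "s 0 = t 0" "tail_equiv s t"
  shows "s = t"
proof
  fix n
  obtain a b where "\<And>i. s (a + i) = t (b + i)"
    using assms(4) unfolding tail_equiv_def by blast
  then show "s n = t n"
    using ray_segments_eq[OF assms(1-3), of "a + n" "b + n" n] by simp
qed

lemma tail_equiv_of_common_vertices:
  assumes r: "is_ray E r" and s: "is_ray E s" and inf: "infinite (range r \<inter> range s)"
  shows "tail_equiv r s"
proof -
  have "range r \<inter> range s \<subseteq> r ` {i. r i \<in> range s}"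
    by blast
  then have I: "infinite {i. r i \<in> range s}"
    using inf finite_subset by blast
  then obtain i j where ij: "r i = s j"
    using not_finite_existsD by fastforce
  have "finite (r -` s ` {..<j})"
    using r by (intro finite_vimageI) (auto simp: is_ray_def)
  then have candidates: "infinite ({i. r i \<in> range s} - r -` s ` {..<j} - {..n})" for n
    using I by (metis Diff_infinite_finite finite_atMost)
  have later: "\<exists>i' j'. r i' = s j' \<and> i' > n \<and> j' \<ge> j" for n
  proof -
    obtain i' where "i' \<in> {i. r i \<in> range s} - r -` s ` {..<j} - {..n}"
      using infinite_imp_nonempty[OF candidates] by blast
    then show ?thesis
      by (force simp: not_less)
  qed
  have "r (i + k) = s (j + k)" for k
  proof -
    obtain i' j' where "r i' = s j'" "i' > i + k" "j' \<ge> j"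
      using later[of "i + k"] by blast
    then show ?thesis
      using ray_segments_eq[OF r s ij, of i' j' k] by simp
  qed
  then show ?thesis
    unfolding tail_equiv_def by blast
qed

lemma distinct_ends_meet_finitely:
  assumes "is_ray E r" "is_ray E r'" "end_of E r \<noteq> end_of E r'"
  shows "finite (range r \<inter> range r')"
  using assms tail_equiv_of_common_vertices[OF assms(1,2)] end_of_tail_equiv by blast

end

section \<open>The parent map towards an end\<close>

locale tree_with_end = acyclic_graph E for E :: "('v \<times> 'v) set" +
  fixes V :: "'v set" and r0 :: "nat \<Rightarrow> 'v"
  assumes edges_in_V: "E \<subseteq> V \<times> V"
    and connected: "\<forall>x\<in>V. \<forall>y\<in>V. \<exists>p. is_path E p \<and> hd p = x \<and> last p = y"
    and ray_r0: "is_ray E r0"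
begin

lemma ray_in_V: "is_ray E s \<Longrightarrow> s i \<in> V"
  using edges_in_V unfolding is_ray_def by blast

lemma ray_to_end_exists:
  assumes "v \<in> V"
  shows "\<exists>s. is_ray E s \<and> s 0 = v \<and> tail_equiv s r0"
proof -
  obtain P where "is_path E P" "hd P = v" "last P = r0 0"
    using connected assms ray_in_V[OF ray_r0] by blast
  then show ?thesis
    using ray_from_walk[of E P r0] ray_r0 by (auto simp: is_path_def)
qed

definition ray_to_end :: "'v \<Rightarrow> nat \<Rightarrow> 'v" where
  "ray_to_end v = (SOME s. is_ray E s \<and> s 0 = v \<and> tail_equiv s r0)"

definition parent :: "'v \<Rightarrow> 'v" where
  "parent v = ray_to_end v 1"

lemma ray_to_end_spec:
  assumes "v \<in> V"
  shows "is_ray E (ray_to_end v)" "ray_to_end v 0 = v" "tail_equiv (ray_to_end v) r0"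
  using someI_ex[OF ray_to_end_exists[OF assms]] unfolding ray_to_end_def by auto

lemma ray_to_end_unique:
  assumes "v \<in> V" "is_ray E s" "s 0 = v" "tail_equiv s r0"
  shows "ray_to_end v = s"
  using ray_unique[OF ray_to_end_spec(1)[OF assms(1)] assms(2)] ray_to_end_spec(2,3)[OF assms(1)] assms(3,4)
    tail_equiv_trans tail_equiv_sym by metis

lemma parent_in_V: "v \<in> V \<Longrightarrow> parent v \<in> V"
  unfolding parent_def using ray_to_end_spec(1) ray_in_V by blast

lemma ray_to_end_parent:
  assumes "v \<in> V"
  shows "ray_to_end (parent v) = (\<lambda>i. ray_to_end v (Suc i))"
proof (rule ray_to_end_unique)
  show "parent v \<in> V"
    using parent_in_V[OF assms] .
  show "is_ray E (\<lambda>i. ray_to_end v (Suc i))"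
    using is_ray_shift[OF ray_to_end_spec(1)[OF assms], of 1] by simp
  show "tail_equiv (\<lambda>i. ray_to_end v (Suc i)) r0"
    using tail_equiv_trans[OF tail_equiv_shift[of _ 1] ray_to_end_spec(3)[OF assms]] by simp
qed (simp add: parent_def)

lemma funpow_parent: "v \<in> V \<Longrightarrow> (parent ^^ n) v = ray_to_end v n"
proof (induction n arbitrary: v)
  case 0
  then show ?case using ray_to_end_spec(2) by simp
next
  case (Suc n)
  then show ?case
    using parent_in_V ray_to_end_parent by (simp add: funpow_Suc_right del: funpow.simps)
qed

lemma funpow_parent_in_V: "v \<in> V \<Longrightarrow> (parent ^^ n) v \<in> V"
  using funpow_parent ray_to_end_spec(1) ray_in_V by simp

lemma funpow_parent_inj: "v \<in> V \<Longrightarrow> (parent ^^ m) v = (parent ^^ n) v \<Longrightarrow> m = n"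
  using ray_to_end_spec(1) by (simp add: funpow_parent is_ray_def inj_eq)

lemma common_ancestor:
  assumes "x \<in> V" "y \<in> V"
  shows "\<exists>a b. (parent ^^ a) x = (parent ^^ b) y"
proof -
  obtain a c where "\<And>i. ray_to_end x (a + i) = r0 (c + i)"
    using ray_to_end_spec(3)[OF assms(1)] unfolding tail_equiv_def by blast
  moreover obtain b d where "\<And>i. ray_to_end y (b + i) = r0 (d + i)"
    using ray_to_end_spec(3)[OF assms(2)] unfolding tail_equiv_def by blast
  ultimately have "ray_to_end x (a + d) = ray_to_end y (b + c)"
    by (metis add.commute)
  then show ?thesis
    using funpow_parent assms by metis
qed

lemma common_ancestor_finite:
  assumes "finite S" "S \<subseteq> V"
  shows "\<exists>m\<in>V. \<forall>x\<in>S. \<exists>c. (parent ^^ c) x = m"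
  using assms
proof (induction S rule: finite_induct)
  case empty
  then show ?case using ray_in_V[OF ray_r0] by blast
next
  case (insert y S)
  then obtain m where m: "m \<in> V" "\<forall>x\<in>S. \<exists>c. (parent ^^ c) x = m"
    by blast
  obtain a b where ab: "(parent ^^ a) y = (parent ^^ b) m"
    using common_ancestor insert.prems m(1) by blast
  have "\<exists>c. (parent ^^ c) x = (parent ^^ b) m" if "x \<in> S" for x
    using m(2) that by (metis funpow_add comp_apply)
  then show ?case
    using ab funpow_parent_in_V[OF m(1)] by blast
qed

lemma edge_parent:
  assumes xy: "(x, y) \<in> E"
  shows "y = parent x \<or> x = parent y"
proof -
  have x: "x \<in> V" and y: "y \<in> V"
    using xy edges_in_V by auto
  let ?s = "ray_to_end x"
  have s: "is_ray E ?s" "?s 0 = x" "tail_equiv ?s r0"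
    using ray_to_end_spec[OF x] by auto
  show ?thesis
  proof (cases "y \<in> range ?s")
    case True
    then obtain j where j: "y = ?s j"
      by blast
    have "j \<noteq> 0"
      using j s(2) xy irrefl_edges unfolding irrefl_def by metis
    moreover have "\<not> 2 \<le> j"
    proof
      assume "2 \<le> j"
      moreover have "(?s j, ?s 0) \<in> E"
        using xy j s(2) sym_edges by (auto dest: symD)
      ultimately have "is_cycle E (map ?s [0..<Suc j])"
        using ray_segment_is_path[OF s(1), of 0 "Suc j"] by (simp add: is_cycle_def hd_map last_map del: upt_Suc)
      then show False
        using no_cycle by blast
    qed
    ultimately have "j = 1"
      by linarith
    then show ?thesis
      using j by (simp add: parent_def)
  next
    case False
    have "is_ray E (case_nat y ?s)"
      using is_ray_case_nat[OF s(1)] xy s(2) False sym_edges by (auto dest: symD)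
    moreover have "tail_equiv (case_nat y ?s) r0"
      using tail_equiv_trans[OF tail_equiv_case_nat s(3)] .
    ultimately have "ray_to_end y = case_nat y ?s"
      using ray_to_end_unique[OF y] by simp
    then show ?thesis
      using s(2) by (simp add: parent_def)
  qed
qed

definition ascending :: "(nat \<Rightarrow> 'v) \<Rightarrow> bool" where
  "ascending s \<longleftrightarrow> (\<forall>i. s (Suc i) = parent (s i))"

definition descending_from :: "(nat \<Rightarrow> 'v) \<Rightarrow> nat \<Rightarrow> bool" where
  "descending_from s N \<longleftrightarrow> (\<forall>i\<ge>N. parent (s (Suc i)) = s i)"

definition descendants :: "'v \<Rightarrow> 'v set" where
  "descendants v = {x. \<exists>n. (parent ^^ n) x = v}"

lemma ascending_funpow: "ascending s \<Longrightarrow> s i = (parent ^^ i) (s 0)"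
  by (induction i) (simp_all add: ascending_def)

lemma ascending_r0: "ascending r0"
proof -
  have "ray_to_end (r0 0) = r0"
    by (rule ray_to_end_unique) (simp_all add: ray_in_V ray_r0 tail_equiv_refl)
  then have "(parent ^^ i) (r0 0) = r0 i" for i
    using funpow_parent ray_in_V[OF ray_r0] by simp
  then show ?thesis
    unfolding ascending_def by (metis funpow.simps(2) comp_apply)
qed

lemma ascending_rays_tail_equiv:
  assumes "is_ray E s" "is_ray E t" "ascending s" "ascending t"
  shows "tail_equiv s t"
proof -
  obtain a b where ab: "(parent ^^ a) (s 0) = (parent ^^ b) (t 0)"
    using common_ancestor[OF ray_in_V[OF assms(1)] ray_in_V[OF assms(2)]] by blast
  have "s (a + i) = t (b + i)" for i
    using ab ascending_funpow[OF assms(3), of "a + i"] ascending_funpow[OF assms(4), of "b + i"]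
    by (simp add: funpow_add add.commute[of _ i])
  then show ?thesis
    unfolding tail_equiv_def by blast
qed

lemma ray_ascending_or_descending:
  assumes s: "is_ray E s"
  shows "ascending s \<or> (\<exists>N. descending_from s N)"
proof (cases "ascending s")
  case False
  then obtain N where N: "s (Suc N) \<noteq> parent (s N)"
    unfolding ascending_def by blast
  have edge: "(s i, s (Suc i)) \<in> E" for i
    using s unfolding is_ray_def by blast
  have "parent (s (Suc M)) = s M" if "N \<le> M" for M
    using that
  proof (induction M rule: dec_induct)
    case base
    then show ?case using edge_parent[OF edge[of N]] N by auto
  next
    case (step M)
    have "s (Suc (Suc M)) \<noteq> s M"
      using s by (simp add: is_ray_def inj_eq)
    then show ?case
      using edge_parent[OF edge[of "Suc M"]] step.IH by auto
  qed
  then show ?thesis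
    unfolding descending_from_def by blast
qed simp

lemma descending_funpow:
  assumes "descending_from s N" "N \<le> M"
  shows "(parent ^^ i) (s (M + i)) = s M"
proof (induction i)
  case (Suc i)
  then show ?case
    using assms by (simp add: descending_from_def funpow_Suc_right del: funpow.simps)
qed simp

lemma finitely_many_ancestors_on_ray:
  assumes x: "x \<in> V" and d: "descending_from s N"
  shows "finite {M. N \<le> M \<and> x \<in> descendants (s M)}"
proof (cases "{M. N \<le> M \<and> x \<in> descendants (s M)} = {}")
  case False
  then obtain M0 n0 where M0: "N \<le> M0" "(parent ^^ n0) x = s M0"
    unfolding descendants_def by blast
  have "M \<le> M0 + n0" if "N \<le> M" "(parent ^^ n) x = s M" for M n
  proof (rule ccontr)
    assume "\<not> M \<le> M0 + n0"
    have "(parent ^^ (M - M0 + n)) x = (parent ^^ (M - M0)) (s M)"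
      using that(2) by (simp add: funpow_add)
    also have "\<dots> = (parent ^^ n0) x"
      using descending_funpow[OF d M0(1), of "M - M0"] M0(2) \<open>\<not> M \<le> M0 + n0\<close> by simp
    finally have "n0 = M - M0 + n"
      using funpow_parent_inj[OF x] by metis
    then show False
      using \<open>\<not> M \<le> M0 + n0\<close> by linarith
  qed
  then have "{M. N \<le> M \<and> x \<in> descendants (s M)} \<subseteq> {..M0 + n0}"
    unfolding descendants_def by blast
  then show ?thesis
    using finite_subset by blast
next
  case True
  then show ?thesis by (simp only: finite.emptyI)
qed

lemma walk_into_descendants:
  assumes walk: "is_walk E X" and out: "hd X \<notin> descendants v" and into: "last X \<in> descendants v"
  shows "v \<in> set X"
proof -
  have "X \<noteq> []"
    using walk by (simp add: is_walk_def)
  then have "\<exists>u\<in>set X. u \<in> descendants v"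
    using into last_in_set by blast
  from split_list_first_prop[OF this] obtain us w ws where X: "X = us @ w # ws" "w \<in> descendants v"
      and us: "\<forall>u\<in>set us. u \<notin> descendants v"
    by blast
  have "us \<noteq> []"
  proof
    assume "us = []"
    then show False
      using X out by simp
  qed
  then have edge: "(last us, w) \<in> E"
    using walk X(1) is_walk_append[of us "w # ws" E] by simp
  have last_out: "last us \<notin> descendants v"
    using us last_in_set[OF \<open>us \<noteq> []\<close>] by blast
  obtain n where n: "(parent ^^ n) w = v"
    using X(2) unfolding descendants_def by blast
  from edge_parent[OF edge] have "w = v"
  proof
    assume "w = parent (last us)"
    then have "(parent ^^ Suc n) (last us) = v"
      using n by (simp add: funpow_Suc_right del: funpow.simps)
    then show "w = v"
      using last_out unfolding descendants_def by blast
  next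
    assume up: "last us = parent w"
    show "w = v"
    proof (cases n)
      case (Suc n')
      then have "(parent ^^ n') (last us) = v"
        using n up by (simp add: funpow_Suc_right del: funpow.simps)
      then show ?thesis
        using last_out unfolding descendants_def by blast
    qed (use n in simp)
  qed
  then show ?thesis
    using X(1) by simp
qed

(* Beyond a vertex s M that is not an ancestor of r0 0, the ray s runs inside the subtree
   below s M, which r0 never enters. *)
lemma descending_ray_cut_from_r0:
  assumes s: "is_ray E s" and d: "descending_from s N"
  obtains M where "\<And>X i j. is_walk E X \<Longrightarrow> hd X = r0 i \<Longrightarrow> last X = s j \<Longrightarrow> M \<le> j
    \<Longrightarrow> s M \<in> set X"
proof -
  have "infinite ({N..} - {M. N \<le> M \<and> r0 0 \<in> descendants (s M)})"
    using finitely_many_ancestors_on_ray[OF ray_in_V[OF ray_r0] d] infinite_Ici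
    by (rule Diff_infinite_finite)
  then obtain M where "M \<in> {N..} - {M. N \<le> M \<and> r0 0 \<in> descendants (s M)}"
    using infinite_imp_nonempty by blast
  then have M: "N \<le> M" "r0 0 \<notin> descendants (s M)"
    by auto
  have r0_out: "r0 i \<notin> descendants (s M)" for i
  proof
    assume "r0 i \<in> descendants (s M)"
    then obtain n where "(parent ^^ n) (r0 i) = s M"
      unfolding descendants_def by blast
    then have "(parent ^^ (n + i)) (r0 0) = s M"
      using ascending_funpow[OF ascending_r0, of i] by (simp add: funpow_add)
    then show False
      using M(2) unfolding descendants_def by blast
  qed
  have "s M \<in> set X" if "is_walk E X" "hd X = r0 i" "last X = s j" "M \<le> j" for X i j
  proof (rule walk_into_descendants)
    show "is_walk E X" "hd X \<notin> descendants (s M)"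
      using that(1,2) r0_out by simp_all
    show "last X \<in> descendants (s M)"
      using descending_funpow[OF d M(1), of "j - M"] that(3,4) unfolding descendants_def by auto
  qed
  then show ?thesis
    using that by blast
qed

lemma tail_equiv_r0_if_ray_equiv:
  assumes s: "is_ray E s" and eq: "ray_equiv E r0 s"
  shows "tail_equiv s r0"
proof (cases "ascending s")
  case True
  then show ?thesis
    using ascending_rays_tail_equiv[OF s ray_r0 _ ascending_r0] by blast
next
  case False
  then obtain N where "descending_from s N"
    using ray_ascending_or_descending[OF s] by blast
  then obtain M where cut: "\<And>X i j. is_walk E X \<Longrightarrow> hd X = r0 i \<Longrightarrow> last X = s j \<Longrightarrow> M \<le> j
      \<Longrightarrow> s M \<in> set X"
    using descending_ray_cut_from_r0[OF s] by blast
  obtain P where P: "infinite P" "\<forall>X\<in>P. is_path E X \<and> hd X \<in> range r0 \<and> last X \<in> range s"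
    and disj: "\<forall>X\<in>P. \<forall>Y\<in>P. X \<noteq> Y \<longrightarrow> set X \<inter> set Y = {}"
    using eq unfolding ray_equiv_def by blast
  \<comment> \<open>All but finitely many of the disjoint paths would have to pass through s M.\<close>
  have through: "s M \<in> set X" if X: "X \<in> P" "last X \<notin> s ` {..<M}" for X
  proof -
    obtain i j where "is_path E X" "hd X = r0 i" "last X = s j"
      using P(2) X(1) by blast
    moreover have "M \<le> j"
      using X(2) \<open>last X = s j\<close> by (metis lessThan_iff not_le imageI)
    ultimately show ?thesis
      using cut by (simp add: is_path_def)
  qed
  have "finite {X\<in>P. last X \<in> s ` {..<M}}"
  proof (rule finite_disjoint_lists_hitting[OF disj])
    show "\<forall>X\<in>P. last X \<in> set X"
      using P(2) by (metis last_in_set not_is_path_Nil)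
  qed simp
  then have rest: "infinite (P - {X\<in>P. last X \<in> s ` {..<M}})"
    using P(1) by (rule Diff_infinite_finite)
  obtain B where B: "B \<subseteq> P - {X\<in>P. last X \<in> s ` {..<M}}" "card B = 2"
    using infinite_arbitrarily_large[OF rest, of 2] by auto
  then obtain X Y where "B = {X, Y}" "X \<noteq> Y"
    by (meson card_2_iff)
  then have "X \<in> P" "Y \<in> P" "X \<noteq> Y" "s M \<in> set X \<inter> set Y"
    using B(1) through by auto
  then show ?thesis
    using disj by blast
qed

lemma descending_ray_in_end:
  assumes "\<omega> \<in> ends E" "\<omega> \<noteq> end_of E r0"
  shows "\<exists>s. is_ray E s \<and> descending_from s 0 \<and> end_of E s = \<omega>"
proof -
  obtain r where r: "is_ray E r" "end_of E r = \<omega>"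
    using assms(1) unfolding ends_def by blast
  have "\<not> ascending r"
  proof
    assume "ascending r"
    then have "end_of E r = end_of E r0"
      using ascending_rays_tail_equiv[OF r(1) ray_r0 _ ascending_r0] end_of_tail_equiv by blast
    then show False
      using assms(2) r(2) by simp
  qed
  then obtain N where N: "descending_from r N"
    using ray_ascending_or_descending[OF r(1)] by blast
  have "is_ray E (\<lambda>i. r (N + i))"
    using is_ray_shift[OF r(1)] .
  moreover have "descending_from (\<lambda>i. r (N + i)) 0"
    using N unfolding descending_from_def by simp
  moreover have "end_of E (\<lambda>i. r (N + i)) = \<omega>"
    using end_of_tail_equiv[OF tail_equiv_shift[of r N]] r(2) by simp
  ultimately show ?thesis
    by blast
qed

section \<open>Generations and orbits\<close>

definition descendants_at :: "nat \<Rightarrow> 'v \<Rightarrow> 'v set" where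
  "descendants_at n m = {x \<in> V. (parent ^^ n) x = m}"

lemma descending_rays_aligned:
  assumes I: "finite I" and rays: "\<And>i. i \<in> I \<Longrightarrow> is_ray E (s i) \<and> descending_from (s i) 0"
  shows "\<exists>m C d. \<forall>i\<in>I. \<forall>j. s i (d i + j) \<in> descendants_at (C + j) m"
proof -
  have "(\<lambda>i. s i 0) ` I \<subseteq> V"
    using rays ray_in_V by blast
  then obtain m where "\<forall>x\<in>(\<lambda>i. s i 0) ` I. \<exists>c. (parent ^^ c) x = m"
    using common_ancestor_finite I by blast
  then have "\<forall>i\<in>I. \<exists>c. (parent ^^ c) (s i 0) = m"
    by blast
  from bchoice[OF this] obtain c where c: "\<forall>i\<in>I. (parent ^^ c i) (s i 0) = m"
    by blast
  define C where "C = Max (c ` I)"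
  show ?thesis
  proof (intro exI[of _ m] exI[of _ C] exI[of _ "\<lambda>i. C - c i"] ballI allI)
    fix i j assume i: "i \<in> I"
    have "c i \<le> C"
      using I i unfolding C_def by simp
    then have "C + j = c i + (C - c i + j)"
      by simp
    then have "(parent ^^ (C + j)) (s i (C - c i + j))
        = (parent ^^ c i) ((parent ^^ (C - c i + j)) (s i (C - c i + j)))"
      by (metis funpow_add comp_apply)
    also have "(parent ^^ (C - c i + j)) (s i (C - c i + j)) = s i 0"
      using descending_funpow[of "s i" 0 0 "C - c i + j"] rays[OF i] by simp
    finally show "s i (C - c i + j) \<in> descendants_at (C + j) m"
      using c i rays[OF i] ray_in_V unfolding descendants_at_def by auto
  qed
qed

lemma descendants_at_of_descending_rays:
  assumes I: "finite I"
    and rays: "\<And>i. i \<in> I \<Longrightarrow> is_ray E (s i) \<and> descending_from (s i) 0"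
    and apart: "\<And>i i'. i \<in> I \<Longrightarrow> i' \<in> I \<Longrightarrow> i \<noteq> i' \<Longrightarrow> finite (range (s i) \<inter> range (s i'))"
  shows "\<exists>m n X. card X = card I \<and> X \<subseteq> descendants_at n m"
proof -
  obtain m C d where aligned: "\<forall>i\<in>I. \<forall>j. s i (d i + j) \<in> descendants_at (C + j) m"
    using descending_rays_aligned[of I s, OF I rays] by blast
  let ?bad = "\<Union>i\<in>I. \<Union>i'\<in>I - {i}. {j. s i (d i + j) = s i' (d i' + j)}"
  have "finite ?bad"
  proof (intro finite_UN_I)
    show "finite I" "\<And>i. finite (I - {i})"
      using I by simp_all
    show "finite {j. s i (d i + j) = s i' (d i' + j)}" if i: "i \<in> I" and i': "i' \<in> I - {i}" for i i'
    proof (rule finite_coincidences)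
      show "inj (s i)"
        using rays[OF i] by (simp add: is_ray_def)
      show "finite (range (s i) \<inter> range (s i'))"
        using apart i i' by blast
    qed
  qed
  then obtain j where "j \<notin> ?bad"
    using ex_new_if_finite[OF infinite_UNIV_nat] by blast
  have "inj_on (\<lambda>i. s i (d i + j)) I"
  proof (rule inj_onI)
    fix i i' assume "i \<in> I" "i' \<in> I" "s i (d i + j) = s i' (d i' + j)"
    then show "i = i'"
      using \<open>j \<notin> ?bad\<close> by blast
  qed
  moreover have "(\<lambda>i. s i (d i + j)) ` I \<subseteq> descendants_at (C + j) m"
    using aligned by blast
  ultimately show ?thesis
    by (intro exI[of _ m] exI[of _ "C + j"] exI[of _ "(\<lambda>i. s i (d i + j)) ` I"]) (simp add: card_image)
qed

lemma large_descendants_at: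
  assumes "infinite (ends E)"
  shows "\<exists>m n X. k \<le> card X \<and> X \<subseteq> descendants_at n m"
proof -
  obtain F where F: "finite F" "card F = Suc k" "F \<subseteq> ends E"
    using infinite_arbitrarily_large[OF assms] by blast
  define I where "I = F - {end_of E r0}"
  have "finite I" "k \<le> card I"
    using F(1,2) unfolding I_def by (simp_all add: card_Diff_singleton_if)
  have "\<forall>\<omega>\<in>I. \<exists>s. is_ray E s \<and> descending_from s 0 \<and> end_of E s = \<omega>"
    using descending_ray_in_end F(3) unfolding I_def by blast
  from bchoice[OF this] obtain s
    where s: "\<forall>\<omega>\<in>I. is_ray E (s \<omega>) \<and> descending_from (s \<omega>) 0 \<and> end_of E (s \<omega>) = \<omega>"
    by blast
  have "finite (range (s \<omega>) \<inter> range (s \<omega>'))" if "\<omega> \<in> I" "\<omega>' \<in> I" "\<omega> \<noteq> \<omega>'" for \<omega> \<omega>'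
    using distinct_ends_meet_finitely s that by simp
  then obtain m n X where "card X = card I" "X \<subseteq> descendants_at n m"
    using descendants_at_of_descending_rays[OF \<open>finite I\<close>] s by blast
  then show ?thesis
    using \<open>k \<le> card I\<close> by (intro exI[of _ m] exI[of _ n] exI[of _ X]) simp
qed

end

locale end_fixing_action = tree_with_end E V r0 + group_action G V \<phi>
  for E :: "('v \<times> 'v) set" and V r0 and G :: "('g, 'b) monoid_scheme" and \<phi> +
  assumes preserves_edges:
      "\<And>g x y. g \<in> carrier G \<Longrightarrow> x \<in> V \<Longrightarrow> y \<in> V \<Longrightarrow> (x, y) \<in> E \<longleftrightarrow> (\<phi> g x, \<phi> g y) \<in> E"
    and fixes_end: "\<And>g r. g \<in> carrier G \<Longrightarrow> r \<in> end_of E r0 \<Longrightarrow> \<phi> g \<circ> r \<in> end_of E r0"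
begin

lemma is_ray_action:
  assumes g: "g \<in> carrier G" and s: "is_ray E s"
  shows "is_ray E (\<phi> g \<circ> s)"
proof -
  have "range s \<subseteq> V"
    using ray_in_V[OF s] by blast
  then have "inj_on (\<phi> g) (range s)"
    using inj_prop[OF g] inj_on_subset by blast
  then have "inj (\<phi> g \<circ> s)"
    using s comp_inj_on by (auto simp: is_ray_def)
  moreover have "(\<phi> g (s i), \<phi> g (s (Suc i))) \<in> E" for i
    using s preserves_edges[OF g ray_in_V[OF s] ray_in_V[OF s]] unfolding is_ray_def by blast
  ultimately show ?thesis
    unfolding is_ray_def by simp
qed

lemma parent_equivariant:
  assumes g: "g \<in> carrier G" and v: "v \<in> V"
  shows "parent (\<phi> g v) = \<phi> g (parent v)"
proof -
  have "r0 \<in> end_of E r0"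
    using ray_r0 ray_equiv_refl unfolding end_of_def by blast
  then have "\<phi> g \<circ> r0 \<in> end_of E r0"
    by (rule fixes_end[OF g])
  then have "tail_equiv (\<phi> g \<circ> r0) r0"
    using tail_equiv_r0_if_ray_equiv unfolding end_of_def by blast
  then have "tail_equiv (\<phi> g \<circ> ray_to_end v) r0"
    using tail_equiv_trans[OF tail_equiv_comp[OF ray_to_end_spec(3)[OF v]]] by blast
  moreover have "\<phi> g v \<in> V"
    using element_image[OF g v refl] .
  ultimately have "ray_to_end (\<phi> g v) = \<phi> g \<circ> ray_to_end v"
    using ray_to_end_unique is_ray_action[OF g ray_to_end_spec(1)[OF v]] ray_to_end_spec(2)[OF v] by simp
  then show ?thesis
    unfolding parent_def by simp
qed

lemma funpow_parent_equivariant: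
  "g \<in> carrier G \<Longrightarrow> v \<in> V \<Longrightarrow> (parent ^^ n) (\<phi> g v) = \<phi> g ((parent ^^ n) v)"
  by (induction n) (simp_all add: parent_equivariant funpow_parent_in_V)

lemma card_descendants_at_le_orbits:
  assumes free: "free_action G V \<phi>" and fin: "finite (orbits G V \<phi>)" and X: "X \<subseteq> descendants_at n m"
  shows "card X \<le> card (orbits G V \<phi>)"
proof -
  have "inj_on (orbit G \<phi>) X"
  proof (rule inj_onI)
    fix a a' assume a: "a \<in> X" "a' \<in> X" "orbit G \<phi> a = orbit G \<phi> a'"
    then have V: "a \<in> V" "a' \<in> V" and lvl: "(parent ^^ n) a = m" "(parent ^^ n) a' = m"
      using X unfolding descendants_at_def by auto
    obtain g where g: "g \<in> carrier G" "a' = \<phi> g a"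
      using orbit_refl[OF V(2)] a(3) unfolding orbit_def by auto
    have "\<phi> g m = m"
      using funpow_parent_equivariant[OF g(1) V(1), of n] lvl g(2) by simp
    then have "g = \<one>\<^bsub>G\<^esub>"
      using free g(1) funpow_parent_in_V[OF V(1), of n] lvl(1) unfolding free_action_def by auto
    then show "a = a'"
      using g(2) id_eq_one V(1) by (metis restrict_apply')
  qed
  moreover have "orbit G \<phi> ` X \<subseteq> orbits G V \<phi>"
    using X unfolding descendants_at_def orbits_def by blast
  ultimately show ?thesis
    using card_inj_on_le fin by blast
qed

end

theorem lemma4p2:
  fixes G :: "('g, 'b) monoid_scheme" and V :: "'v set" and E :: "('v \<times> 'v) set"
    and \<phi> :: "'g \<Rightarrow> 'v \<Rightarrow> 'v"
  assumes "group G"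
    and "tree_action G V E \<phi>"
    and "quasi_transitive G V \<phi>"
    and "infinite (ends E)"
    and "stabilizes_an_end G E \<phi>"
  shows "\<not> free_action G V \<phi>"
proof
  \<comment> \<open>The hypothesis \<open>group G\<close> is implied by \<open>group_action G V \<phi>\<close> and not needed.\<close>
  assume free: "free_action G V \<phi>"
  obtain \<omega> where "\<omega> \<in> ends E" and stab: "\<forall>g\<in>carrier G. \<forall>r\<in>\<omega>. \<phi> g \<circ> r \<in> \<omega>"
    using assms(5) unfolding stabilizes_an_end_def by blast
  then obtain r0 where r0: "is_ray E r0" "\<omega> = end_of E r0"
    unfolding ends_def by blast
  have tree: "tree_with_end E V r0"
    using assms(2) r0(1) unfolding tree_action_def is_tree_def by unfold_locales auto
  have action: "group_action G V \<phi>"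
    using assms(2) unfolding tree_action_def by blast
  interpret end_fixing_action E V r0 G \<phi>
    using assms(2) stab r0(2) unfolding tree_action_def
    by (intro end_fixing_action.intro end_fixing_action_axioms.intro tree action) auto
  obtain m n X where X: "Suc (card (orbits G V \<phi>)) \<le> card X" "X \<subseteq> descendants_at n m"
    using large_descendants_at[OF assms(4)] by blast
  have "card X \<le> card (orbits G V \<phi>)"
    using card_descendants_at_le_orbits[OF free _ X(2)] assms(3) unfolding quasi_transitive_def by blast
  then show False
    using X(1) by simp
qed

end
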